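(* Let $\Theta$ be a parameter set, where each $\theta\in\Theta$ determines a probability distribution $p_\theta$ over trajectories, and write $KL(\theta'\|\theta):=KL(p_{\theta'}\|p_\theta)$. Let $C:\Theta\to\mathbb{R}$ be a cost function, and for $\alpha>0$ let $J^{\alpha}(\theta)=\inf_{\theta'}\big(\alpha KL(\theta'\|\theta)+C(\theta')\big)$. For a step size $\mathcal{E}>0$ define the direct update $\Theta^{C}_{\mathcal{E}}(\theta)=\operatorname{argmin}_{\theta':\,KL(\theta'\|\theta)\le\mathcal{E}} C(\theta')$, the smoothed update $R^{J^\alpha}_{\mathcal{E}}(\theta)=\operatorname{argmin}_{\theta':\,KL(\theta'\|\theta)\le\mathcal{E}} J^{\alpha}(\theta')$, and the optimal two-step cost $$C^*_{\mathcal{E},\mathcal{E}'}(\theta)=\min_{\theta':\,KL(\theta'\|\theta)\le\mathcal{E}}\ \min_{\theta'':\,KL(\theta''\|\theta')\le\mathcal{E}'} C(\theta'')=\min_{\theta':\,KL(\theta'\|\theta)\le\mathcal{E}} C\big(\Theta^{C}_{\mathcal{E}'}(\theta')\big).$$ Then: (1) For every $\theta$, every $\mathcal{E}>0$ and every $\alpha>0$ there exists $\mathcal{E}'=\mathcal{E}'_\alpha(\theta)$ (depending on $\theta$ and $\alpha$) such that, setting $\Theta'=R^{J^\alpha}_{\mathcal{E}}(\theta)$ and $\Theta''=\Theta^{C}_{\mathcal{E}'}(\Theta')$, one has $C(\Theta'')=C^*_{\mathcal{E},\mathcal{E}'}(\theta)$; i.e. a smoothed update with step size $\mathcal{E}$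 followed by a direct update with step size $\mathcal{E}'$ is an optimal two-step update. (2) The step size $\mathcal{E}'_\alpha(\theta)$ in (1) is monotonically decreasing (non-increasing) as a function of $\alpha$.
   Context: All minima, infima and argmins appearing above are assumed to be attained (the paper treats them as well-defined minimizers). The quantity $KL(\theta'\|\theta)$ is the Kullback–Leibler divergence between the trajectory distributions induced by the parameters $\theta'$ and $\theta$, and is nonnegative with $KL(\theta\|\theta)=0$. *)

theory Defs
  imports Complex_Main
begin

text \<open>Parameters live in an abstract type 'p. The divergence is given as an abstract
function KL, where KL t' t stands for KL(t' || t) = KL(p_t' || p_t).\<close>

definition is_min_on :: "('p \<Rightarrow> real) \<Rightarrow> 'p set \<Rightarrow> 'p \<Rightarrow> bool" where
  "is_min_on f S x \<longleftrightarrow> x \<in> S \<and> (\<forall>y\<in>S. f x \<le> f y)"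

definition KL_ball :: "('p \<Rightarrow> 'p \<Rightarrow> real) \<Rightarrow> real \<Rightarrow> 'p \<Rightarrow> 'p set" where
  "KL_ball KL r t = {t'. KL t' t \<le> r}"

definition Jsmooth :: "('p \<Rightarrow> 'p \<Rightarrow> real) \<Rightarrow> ('p \<Rightarrow> real) \<Rightarrow> real \<Rightarrow> 'p \<Rightarrow> real" where
  "Jsmooth KL C \<alpha> t = (INF t'. \<alpha> * KL t' t + C t')"

text \<open>Optimal value of a direct update: min of C over the KL ball of radius r around t.\<close>
definition ball_min :: "('p \<Rightarrow> 'p \<Rightarrow> real) \<Rightarrow> ('p \<Rightarrow> real) \<Rightarrow> real \<Rightarrow> 'p \<Rightarrow> real" where
  "ball_min KL C r t = (INF t'' \<in> KL_ball KL r t. C t'')"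

definition Cstar :: "('p \<Rightarrow> 'p \<Rightarrow> real) \<Rightarrow> ('p \<Rightarrow> real) \<Rightarrow> real \<Rightarrow> real \<Rightarrow> 'p \<Rightarrow> real" where
  "Cstar KL C E E' t = (INF t' \<in> KL_ball KL E t. ball_min KL C E' t')"

end

theory Submission
  imports Defs
begin

text \<open>Let \<open>R\<close> minimise \<open>J\<^sup>\<alpha>\<close> over the \<open>E\<close>-ball around \<open>\<theta>\<close>, let \<open>s\<close> attain
  \<open>J\<^sup>\<alpha>(R) = \<alpha> KL(s\<parallel>R) + C(s)\<close> and put \<open>e = KL(s\<parallel>R)\<close>. Bounding \<open>J\<^sup>\<alpha>\<close> at an optimal first
  step of the two-step problem with radius \<open>r\<close> gives \<open>J\<^sup>\<alpha>(R) \<le> \<alpha> r + C\<^sup>*\<^sub>E\<^sub>,\<^sub>r(\<theta>)\<close>, while \<open>s\<close>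
  lies in the \<open>e\<close>-ball around \<open>R\<close>, so \<open>C\<^sup>*\<^sub>E\<^sub>,\<^sub>e(\<theta>) \<le> C(s)\<close>. Hence \<open>C(s) = C\<^sup>*\<^sub>E\<^sub>,\<^sub>e(\<theta>)\<close>:
  a direct step of size \<open>e\<close> from \<open>R\<close> is an optimal two-step update, and \<open>e\<close> minimises
  \<open>r \<mapsto> \<alpha> r + C\<^sup>*\<^sub>E\<^sub>,\<^sub>r(\<theta>)\<close> over \<open>r \<ge> 0\<close>. Minimisers of a linearly penalised function
  cannot increase with the penalty weight \<open>\<alpha>\<close>.\<close>

lemma is_min_on_INF:
  fixes f :: "'a \<Rightarrow> real"
  assumes "is_min_on f S x"
  shows "(INF y\<in>S. f y) = f x"
  using assms unfolding is_min_on_def by (intro cInf_eq_minimum) auto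

lemma INF_le_of_is_min_on:
  fixes f :: "'a \<Rightarrow> real"
  assumes "is_min_on f S m" and "y \<in> S"
  shows "(INF x\<in>S. f x) \<le> f y"
  using assms by (simp add: is_min_on_INF is_min_on_def)

lemma is_min_on_penalized_antitone:
  fixes \<phi> :: "real \<Rightarrow> real"
  assumes x: "is_min_on (\<lambda>r. \<alpha> * r + \<phi> r) S x"
    and y: "is_min_on (\<lambda>r. \<beta> * r + \<phi> r) S y"
    and "\<alpha> < \<beta>"
  shows "y \<le> x"
proof -
  have "\<alpha> * x + \<phi> x \<le> \<alpha> * y + \<phi> y" "\<beta> * y + \<phi> y \<le> \<beta> * x + \<phi> x"
    using x y unfolding is_min_on_def by auto
  then have "(\<beta> - \<alpha>) * (y - x) \<le> 0"
    by (simp add: algebra_simps)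
  with \<open>\<alpha> < \<beta>\<close> show ?thesis
    by (simp add: mult_le_0_iff)
qed

locale KL_minima_attained =
  fixes KL :: "'p \<Rightarrow> 'p \<Rightarrow> real" and C :: "'p \<Rightarrow> real"
  assumes KL_nonneg: "KL t' t \<ge> 0"
    and penalized_attained: "\<alpha> > 0 \<Longrightarrow> \<exists>m. is_min_on (\<lambda>s. \<alpha> * KL s t + C s) UNIV m"
    and C_attained: "r \<ge> 0 \<Longrightarrow> \<exists>m. is_min_on C (KL_ball KL r t) m"
    and ball_min_attained:
      "r > 0 \<Longrightarrow> r' \<ge> 0 \<Longrightarrow> \<exists>m. is_min_on (ball_min KL C r') (KL_ball KL r t) m"
begin

lemma Jsmooth_le: "\<alpha> > 0 \<Longrightarrow> Jsmooth KL C \<alpha> t \<le> \<alpha> * KL x t + C x"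
  unfolding Jsmooth_def using penalized_attained by (blast intro: INF_le_of_is_min_on)

lemma ball_min_le: "x \<in> KL_ball KL r t \<Longrightarrow> ball_min KL C r t \<le> C x"
  unfolding ball_min_def
  using C_attained order_trans[OF KL_nonneg] by (fastforce simp: KL_ball_def intro: INF_le_of_is_min_on)

lemma Cstar_le_ball_min:
  "E > 0 \<Longrightarrow> r \<ge> 0 \<Longrightarrow> t \<in> KL_ball KL E \<theta> \<Longrightarrow> Cstar KL C E r \<theta> \<le> ball_min KL C r t"
  unfolding Cstar_def using ball_min_attained by (blast intro: INF_le_of_is_min_on)

lemma Jsmooth_le_penalized_ball_min:
  assumes "\<alpha> > 0" and "r \<ge> 0"
  shows "Jsmooth KL C \<alpha> t \<le> \<alpha> * r + ball_min KL C r t"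
proof -
  obtain u where u: "is_min_on C (KL_ball KL r t) u"
    using C_attained[OF \<open>r \<ge> 0\<close>] by blast
  have "Jsmooth KL C \<alpha> t \<le> \<alpha> * KL u t + C u"
    using \<open>\<alpha> > 0\<close> by (rule Jsmooth_le)
  also have "\<dots> \<le> \<alpha> * r + C u"
    using u \<open>\<alpha> > 0\<close> by (simp add: is_min_on_def KL_ball_def)
  finally show ?thesis
    unfolding ball_min_def is_min_on_INF[OF u] .
qed

lemma Jsmooth_min_le_penalized_Cstar:
  assumes "\<alpha> > 0" and "E > 0" and "r \<ge> 0"
    and R_min: "is_min_on (Jsmooth KL C \<alpha>) (KL_ball KL E \<theta>) R"
  shows "Jsmooth KL C \<alpha> R \<le> \<alpha> * r + Cstar KL C E r \<theta>"
proof -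
  obtain t where t: "is_min_on (ball_min KL C r) (KL_ball KL E \<theta>) t"
    using ball_min_attained[OF \<open>E > 0\<close> \<open>r \<ge> 0\<close>] by blast
  have "Jsmooth KL C \<alpha> R \<le> Jsmooth KL C \<alpha> t"
    using R_min t by (simp add: is_min_on_def)
  also have "\<dots> \<le> \<alpha> * r + ball_min KL C r t"
    using \<open>\<alpha> > 0\<close> \<open>r \<ge> 0\<close> by (rule Jsmooth_le_penalized_ball_min)
  finally show ?thesis
    unfolding Cstar_def is_min_on_INF[OF t] .
qed

context
  fixes \<alpha> E \<theta> R s
  assumes \<alpha>_pos: "\<alpha> > 0" and E_pos: "E > 0"
    and R_min: "is_min_on (Jsmooth KL C \<alpha>) (KL_ball KL E \<theta>) R"
    and s_min: "is_min_on (\<lambda>x. \<alpha> * KL x R + C x) UNIV s"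
begin

lemma Jsmooth_min_eq: "Jsmooth KL C \<alpha> R = \<alpha> * KL s R + C s"
  unfolding Jsmooth_def using is_min_on_INF[OF s_min] by simp

lemma Cstar_step_eq:
  shows "Cstar KL C E (KL s R) \<theta> = C s" and "ball_min KL C (KL s R) R = C s"
proof -
  have "Cstar KL C E (KL s R) \<theta> \<le> ball_min KL C (KL s R) R"
    using R_min by (intro Cstar_le_ball_min E_pos KL_nonneg) (simp add: is_min_on_def)
  moreover have "ball_min KL C (KL s R) R \<le> C s"
    by (rule ball_min_le) (simp add: KL_ball_def)
  moreover have "C s \<le> Cstar KL C E (KL s R) \<theta>"
    using Jsmooth_min_le_penalized_Cstar[OF \<alpha>_pos E_pos KL_nonneg[of s R] R_min]
    by (simp add: Jsmooth_min_eq)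
  ultimately show "Cstar KL C E (KL s R) \<theta> = C s" and "ball_min KL C (KL s R) R = C s"
    by linarith+
qed

lemma step_minimizes_penalized_Cstar:
  "is_min_on (\<lambda>r. \<alpha> * r + Cstar KL C E r \<theta>) {0..} (KL s R)"
  using Jsmooth_min_le_penalized_Cstar[OF \<alpha>_pos E_pos _ R_min]
  by (simp add: is_min_on_def KL_nonneg Cstar_step_eq(1) flip: Jsmooth_min_eq)

lemma direct_step_optimal:
  assumes "is_min_on C (KL_ball KL (KL s R) R) t"
  shows "C t = Cstar KL C E (KL s R) \<theta>"
  using Cstar_step_eq is_min_on_INF[OF assms] by (simp add: ball_min_def)

end

end

theorem theorem1:
  fixes KL :: "'p \<Rightarrow> 'p \<Rightarrow> real" and C :: "'p \<Rightarrow> real"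
  assumes KL_nonneg: "\<And>t' t. KL t' t \<ge> 0"
    and KL_self: "\<And>t. KL t t = 0"
    \<comment> \<open>all minima/infima are attained\<close>
    and J_attained: "\<And>\<alpha> t. \<alpha> > 0 \<Longrightarrow> \<exists>t'. is_min_on (\<lambda>s. \<alpha> * KL s t + C s) UNIV t'"
    and C_attained: "\<And>r t. r \<ge> 0 \<Longrightarrow> \<exists>t''. is_min_on C (KL_ball KL r t) t''"
    and JC_attained: "\<And>\<alpha> r t. \<alpha> > 0 \<Longrightarrow> r > 0 \<Longrightarrow>
                        \<exists>t'. is_min_on (Jsmooth KL C \<alpha>) (KL_ball KL r t) t'"
    and Cstar_attained: "\<And>r r' t. r > 0 \<Longrightarrow> r' \<ge> 0 \<Longrightarrow>
                        \<exists>t'. is_min_on (ball_min KL C r') (KL_ball KL r t) t'"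
  assumes E_pos: "E > 0"
    \<comment> \<open>R \<alpha> is the smoothed update R^{J^\<alpha>}_E(\<theta>) (a chosen minimizer, for each \<alpha> > 0)\<close>
    and R_min: "\<And>\<alpha>. \<alpha> > 0 \<Longrightarrow> is_min_on (Jsmooth KL C \<alpha>) (KL_ball KL E \<theta>) (R \<alpha>)"
  shows "\<exists>E' :: real \<Rightarrow> real.
           (\<forall>\<alpha>>0. E' \<alpha> \<ge> 0 \<and>
              (\<forall>\<theta>''. is_min_on C (KL_ball KL (E' \<alpha>) (R \<alpha>)) \<theta>'' \<longrightarrow>
                  C \<theta>'' = Cstar KL C E (E' \<alpha>) \<theta>)) \<and>
           (\<forall>\<alpha> \<beta>. 0 < \<alpha> \<longrightarrow> \<alpha> \<le> \<beta> \<longrightarrow> E' \<beta> \<le> E' \<alpha>)"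
proof -
  interpret kl: KL_minima_attained KL C
    using KL_nonneg J_attained C_attained Cstar_attained by unfold_locales
  define s where "s \<alpha> = (SOME s. is_min_on (\<lambda>x. \<alpha> * KL x (R \<alpha>) + C x) UNIV s)" for \<alpha>
  have s_min: "is_min_on (\<lambda>x. \<alpha> * KL x (R \<alpha>) + C x) UNIV (s \<alpha>)" if "\<alpha> > 0" for \<alpha>
    unfolding s_def using J_attained[OF that] by (rule someI_ex)
  have step_min: "is_min_on (\<lambda>r. \<alpha> * r + Cstar KL C E r \<theta>) {0..} (KL (s \<alpha>) (R \<alpha>))"
    if "\<alpha> > 0" for \<alpha>
    using that E_pos R_min[OF that] s_min[OF that] by (rule kl.step_minimizes_penalized_Cstar)
  show ?thesis
  proof (intro exI[of _ "\<lambda>\<alpha>. KL (s \<alpha>) (R \<alpha>)"] conjI allI impI)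
    fix \<alpha> \<beta> :: real
    assume "0 < \<alpha>" "\<alpha> \<le> \<beta>"
    then show "KL (s \<beta>) (R \<beta>) \<le> KL (s \<alpha>) (R \<alpha>)"
      using is_min_on_penalized_antitone[OF step_min step_min, of \<alpha> \<beta>]
      by (cases "\<alpha> = \<beta>") auto
  qed (use KL_nonneg kl.direct_step_optimal[OF _ E_pos R_min s_min] in auto)
qed

end
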